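(* Let $m,a,b,t\in\mathbb{N}$ with $m\geq 3$, $a\geq 1$, $t\in\{2,\ldots,m-1\}$ and $(t-1)(am+1)<bm+t<t(am+1)$, and let $S=\langle m,\ am+1,\ bm+t\rangle$ (a MANS-semigroup with embedding dimension $3$). Then \[ \mathrm{F}(S)=r(am+1)+q(bm+t)-m, \] where $q=\left\lfloor\frac{m-1}{t}\right\rfloor$ and $r=(m-1)\bmod t$.
   Context: $\mathbb{N}=\{0,1,2,\ldots\}$. $\langle A\rangle$ is the submonoid of $(\mathbb{N},+)$ generated by $A$; a numerical semigroup is a submonoid of $\mathbb{N}$ with finite complement. $\mathrm{F}(S)$, the Frobenius number, is the greatest integer not in $S$. A MANS-semigroup is a numerical semigroup with $w(1)<\cdots<w(\mathrm{m}(S)-1)$, where $\mathrm{m}(S)$ is the least element of $S\setminus\{0\}$ and $w(i)$ the least element of $S$ congruent to $i$ modulo $\mathrm{m}(S)$. $a\bmod b$ is the remainder of the division of $a$ by $b$. *)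

theory Defs
  imports Main
begin

inductive_set gen_monoid :: "nat set \<Rightarrow> nat set" for A :: "nat set" where
  zero: "0 \<in> gen_monoid A"
| add: "x \<in> gen_monoid A \<Longrightarrow> a \<in> A \<Longrightarrow> x + a \<in> gen_monoid A"

definition frobenius :: "nat set \<Rightarrow> int" where
  "frobenius S = (GREATEST z :: int. z \<notin> int ` S)"

end

theory Submission
  imports Defs
begin

text \<open>
  With \<open>n\<^sub>1 = am + 1\<close> and \<open>n\<^sub>2 = bm + t\<close>, an element \<open>pm + yn\<^sub>1 + zn\<^sub>2\<close> of \<open>S\<close> is congruent to
  \<open>y + zt\<close> modulo \<open>m\<close>. The hypothesis \<open>n\<^sub>2 < tn\<^sub>1\<close> makes it cheapest to reach a given \<open>j = y + zt\<close> by
  taking \<open>z = j div t\<close> and \<open>y = j mod t\<close>, and \<open>(t - 1)n\<^sub>1 < n\<^sub>2\<close> makes the resulting cost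
  \<open>w(j) = (j mod t)n\<^sub>1 + (j div t)n\<^sub>2\<close> increasing in \<open>j\<close>. Hence \<open>w(0), \<dots>, w(m - 1)\<close> is the Apery
  set of \<open>S\<close> with respect to \<open>m\<close>, its largest element is \<open>w(m - 1)\<close>, and the Frobenius number is
  \<open>w(m - 1) - m\<close>.
\<close>

lemma frobenius_eqI:
  assumes "f \<notin> int ` S" and "\<And>x. f < x \<Longrightarrow> x \<in> int ` S"
  shows "frobenius S = f"
  unfolding frobenius_def
proof (rule Greatest_equality)
  show "\<And>y. y \<notin> int ` S \<Longrightarrow> y \<le> f"
    using assms(2) by force
qed (fact assms(1))

lemma le_if_mod_eq_less_add:
  fixes u n m :: nat
  assumes "u mod m = n mod m" and "u < n + m"
  shows "u \<le> n"
proof (rule ccontr)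
  assume "\<not> u \<le> n"
  then obtain k where "u = n + m * k"
    using assms(1) by (metis mod_eq_nat2E nat_le_linear)
  with assms(2) \<open>\<not> u \<le> n\<close> show False
    by (cases k) auto
qed

lemma frobenius_eq_Apery_max:
  fixes S :: "nat set" and w :: "nat \<Rightarrow> nat"
  assumes "0 < m"
    and add_m: "\<And>s. s \<in> S \<Longrightarrow> s + m \<in> S"
    and w_mem: "\<And>i. i < m \<Longrightarrow> w i \<in> S"
    and w_mod: "\<And>i. i < m \<Longrightarrow> w i mod m = i"
    and w_least: "\<And>s. s \<in> S \<Longrightarrow> w (s mod m) \<le> s"
    and "j < m" and w_max: "\<And>i. i < m \<Longrightarrow> w i \<le> w j"
  shows "frobenius S = int (w j) - int m"
proof (rule frobenius_eqI)
  have add_mult_m: "s + k * m \<in> S" if "s \<in> S" for s k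
  proof (induction k)
    case (Suc k)
    then show ?case
      using add_m [OF Suc] by (simp add: ac_simps)
  qed (simp add: that)
  show "int (w j) - int m \<notin> int ` S"
  proof
    assume "int (w j) - int m \<in> int ` S"
    then obtain s where "s \<in> S" and s: "s + m = w j"
      by force
    then have "s mod m = j"
      using w_mod [OF \<open>j < m\<close>] by (metis mod_add_self2)
    then show False
      using w_least [OF \<open>s \<in> S\<close>] s \<open>0 < m\<close> by simp
  qed
  fix x :: int
  assume x: "int (w j) - int m < x"
  have "m - 1 \<le> w (m - 1)"
    using w_mod [of "m - 1"] \<open>0 < m\<close> mod_less_eq_dividend [of "w (m - 1)" m] by simp
  with w_max [of "m - 1"] \<open>0 < m\<close> have "int m \<le> int (w j) + 1"
    by simp
  with x have "0 \<le> x"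
    by linarith
  then obtain N where N: "x = int N"
    using nonneg_int_cases by blast
  define i where "i = N mod m"
  have "i < m" and w_i: "w i mod m = N mod m"
    using \<open>0 < m\<close> w_mod by (simp_all add: i_def)
  have "w i < N + m"
    using w_max [OF \<open>i < m\<close>] x N by simp
  with w_i have "w i \<le> N"
    by (rule le_if_mod_eq_less_add)
  then obtain k where "N = w i + m * k"
    using w_i by (metis mod_eq_nat1E)
  then have "N \<in> S"
    using add_mult_m [OF w_mem [OF \<open>i < m\<close>], of k] by (simp add: mult.commute)
  then show "x \<in> int ` S"
    using N by simp
qed

lemma gen_monoid_add_mult:
  assumes "x \<in> gen_monoid A" and "c \<in> A"
  shows "x + k * c \<in> gen_monoid A"
proof (induction k)
  case (Suc k)
  then show ?case
    using gen_monoid.add [OF Suc \<open>c \<in> A\<close>] by (simp add: ac_simps)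
qed (simp add: assms(1))

lemma mem_gen_monoid_three_iff:
  "x \<in> gen_monoid {m, n\<^sub>1, n\<^sub>2} \<longleftrightarrow> (\<exists>p y z. x = p * m + y * n\<^sub>1 + z * n\<^sub>2)"
proof
  show "x \<in> gen_monoid {m, n\<^sub>1, n\<^sub>2} \<Longrightarrow> \<exists>p y z. x = p * m + y * n\<^sub>1 + z * n\<^sub>2"
  proof (induction rule: gen_monoid.induct)
    case zero
    show ?case by auto
  next
    case (add x c)
    then obtain p y z where x: "x = p * m + y * n\<^sub>1 + z * n\<^sub>2"
      by blast
    from add.hyps(2) consider "c = m" | "c = n\<^sub>1" | "c = n\<^sub>2"
      by blast
    then show ?case
    proof cases
      case 1
      then show ?thesis
        using x by (intro exI [of _ "Suc p"] exI [of _ y] exI [of _ z]) simp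
    next
      case 2
      then show ?thesis
        using x by (intro exI [of _ p] exI [of _ "Suc y"] exI [of _ z]) simp
    next
      case 3
      then show ?thesis
        using x by (intro exI [of _ p] exI [of _ y] exI [of _ "Suc z"]) simp
    qed
  qed
next
  assume "\<exists>p y z. x = p * m + y * n\<^sub>1 + z * n\<^sub>2"
  then obtain p y z where x: "x = p * m + y * n\<^sub>1 + z * n\<^sub>2"
    by blast
  have "0 + p * m + y * n\<^sub>1 + z * n\<^sub>2 \<in> gen_monoid {m, n\<^sub>1, n\<^sub>2}"
    by (intro gen_monoid_add_mult gen_monoid.zero) auto
  then show "x \<in> gen_monoid {m, n\<^sub>1, n\<^sub>2}"
    by (simp add: x)
qed

definition apery_elem :: "nat \<Rightarrow> nat \<Rightarrow> nat \<Rightarrow> nat \<Rightarrow> nat" where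
  "apery_elem t n\<^sub>1 n\<^sub>2 j = (j mod t) * n\<^sub>1 + (j div t) * n\<^sub>2"

lemma mono_apery_elem:
  assumes "(t - 1) * n\<^sub>1 \<le> n\<^sub>2"
  shows "mono (apery_elem t n\<^sub>1 n\<^sub>2)"
proof (rule mono_iff_le_Suc [THEN iffD2], rule allI)
  fix j
  show "apery_elem t n\<^sub>1 n\<^sub>2 j \<le> apery_elem t n\<^sub>1 n\<^sub>2 (Suc j)"
  proof (cases "Suc (j mod t) = t")
    case True
    then have "j mod t = t - 1"
      by simp
    with True assms show ?thesis
      by (simp add: apery_elem_def mod_Suc div_Suc)
  next
    case False
    then show ?thesis
      by (simp add: apery_elem_def mod_Suc div_Suc)
  qed
qed

lemma apery_elem_le_cost:
  assumes "n\<^sub>2 \<le> t * n\<^sub>1"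
  shows "apery_elem t n\<^sub>1 n\<^sub>2 (y + z * t) \<le> y * n\<^sub>1 + z * n\<^sub>2"
proof (cases "t = 0")
  case False
  have "(y div t) * n\<^sub>2 \<le> (y div t) * t * n\<^sub>1"
    using assms by (simp add: mult.assoc)
  moreover have "y * n\<^sub>1 = (y div t) * t * n\<^sub>1 + (y mod t) * n\<^sub>1"
    by (metis div_mult_mod_eq distrib_right)
  ultimately show ?thesis
    using False by (simp add: apery_elem_def algebra_simps)
qed (simp add: apery_elem_def)

lemma apery_elem_mod:
  "apery_elem t (a * m + 1) (b * m + t) j mod m = j mod m"
proof -
  have "apery_elem t (a * m + 1) (b * m + t) j =
      (j mod t + j div t * t) + m * ((j mod t) * a + (j div t) * b)"
    by (simp add: apery_elem_def algebra_simps)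
  then show ?thesis
    by simp
qed

lemma apery_elem_least:
  assumes "(t - 1) * (a * m + 1) \<le> b * m + t" and "b * m + t \<le> t * (a * m + 1)"
    and "s \<in> gen_monoid {m, a * m + 1, b * m + t}"
  shows "apery_elem t (a * m + 1) (b * m + t) (s mod m) \<le> s"
proof -
  let ?w = "apery_elem t (a * m + 1) (b * m + t)"
  obtain p y z where s: "s = p * m + y * (a * m + 1) + z * (b * m + t)"
    using assms(3) mem_gen_monoid_three_iff by blast
  have "s = (y + z * t) + m * (p + y * a + z * b)"
    by (simp add: s algebra_simps)
  then have "s mod m = (y + z * t) mod m"
    by (metis mod_mult_self2)
  then have "?w (s mod m) \<le> ?w (y + z * t)"
    using mono_apery_elem [OF assms(1)] by (simp add: monoD)
  also have "\<dots> \<le> y * (a * m + 1) + z * (b * m + t)"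
    by (rule apery_elem_le_cost [OF assms(2)])
  also have "\<dots> \<le> s"
    by (simp add: s)
  finally show ?thesis .
qed

theorem proposition3p9:
  fixes m a b t :: nat
  assumes "m \<ge> 3" and "a \<ge> 1" and "2 \<le> t" and "t \<le> m - 1"
    and "(t - 1) * (a * m + 1) < b * m + t" and "b * m + t < t * (a * m + 1)"
  shows "frobenius (gen_monoid {m, a * m + 1, b * m + t}) =
           int (((m - 1) mod t) * (a * m + 1) + ((m - 1) div t) * (b * m + t)) - int m"
proof -
  let ?S = "gen_monoid {m, a * m + 1, b * m + t}"
  let ?w = "apery_elem t (a * m + 1) (b * m + t)"
  have lower: "(t - 1) * (a * m + 1) \<le> b * m + t" and upper: "b * m + t \<le> t * (a * m + 1)"
    using assms(5,6) by simp_all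
  have "frobenius ?S = int (?w (m - 1)) - int m"
  proof (rule frobenius_eq_Apery_max [where w = ?w and j = "m - 1"])
    show "\<And>s. s \<in> ?S \<Longrightarrow> s + m \<in> ?S"
      by (simp add: gen_monoid.add)
    show "\<And>i. i < m \<Longrightarrow> ?w i \<in> ?S"
      unfolding apery_elem_def mem_gen_monoid_three_iff by (metis mult_0 plus_nat.add_0)
    show "\<And>i. i < m \<Longrightarrow> ?w i mod m = i"
      by (simp only: apery_elem_mod mod_less)
    show "\<And>s. s \<in> ?S \<Longrightarrow> ?w (s mod m) \<le> s"
      by (rule apery_elem_least [OF lower upper])
    show "\<And>i. i < m \<Longrightarrow> ?w i \<le> ?w (m - 1)"
      using mono_apery_elem [OF lower] by (simp add: monoD)
  qed (use assms(1) in simp_all)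
  then show ?thesis
    by (simp add: apery_elem_def)
qed

end
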